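(* For the binary tree-shifts $X_5=(A,E)$ and $X_7=(A,G)$, the limit $h_{PS}$ exists and $$h_{PS}(X_5)=h_{PS}(X_7)=\sum_{n=2}^\infty\frac{\log n}{2^n}.$$
   Context: Binary tree-shifts: $k=2$, directions $a_1,a_2$, alphabet $\{0,1\}$; $(P,Q)$ is the set of trees $t:\{a_1,a_2\}^*\to\{0,1\}$ with $P_{t_x,t_{xa_1}}=1$, $Q_{t_x,t_{xa_2}}=1$ for all nodes $x$. Matrices: $A=\begin{pmatrix}1&1\\1&1\end{pmatrix}$, $E=\begin{pmatrix}1&0\\1&1\end{pmatrix}$, $G=\begin{pmatrix}1&1\\0&1\end{pmatrix}$. $p(n)$ is the number of allowed blocks of length $n$ (labellings $t|_{\Delta_n}$, $\Delta_n$ the words of length $\le n$), and $h_{PS}=\lim_{n\to\infty}\frac{\log p(n)}{1+2+\cdots+2^n}$. *)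

theory Defs
  imports Complex_Main "HOL-Library.FuncSet"
begin

text \<open>Nodes of the binary tree are words over the two directions;
  False stands for a_1 and True for a_2.\<close>

type_synonym node = "bool list"
type_synonym tree = "node \<Rightarrow> nat"
type_synonym mat01 = "nat \<Rightarrow> nat \<Rightarrow> nat"

definition matA :: mat01 where "matA i j = 1"
definition matE :: mat01 where "matE i j = (if i = 0 \<and> j = 1 then 0 else 1)"
definition matG :: mat01 where "matG i j = (if i = 1 \<and> j = 0 then 0 else 1)"

definition tree_shift :: "mat01 \<Rightarrow> mat01 \<Rightarrow> tree set" where
  "tree_shift P Q = {t. (\<forall>x. t x \<in> {0,1}) \<and>
      (\<forall>x. P (t x) (t (x @ [False])) = 1) \<and>
      (\<forall>x. Q (t x) (t (x @ [True])) = 1)}"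

definition Delta :: "nat \<Rightarrow> node set" where
  "Delta n = {x. length x \<le> n}"

definition num_blocks :: "tree set \<Rightarrow> nat \<Rightarrow> nat" where
  "num_blocks X n = card ((\<lambda>t. restrict t (Delta n)) ` X)"

definition hps_seq :: "tree set \<Rightarrow> nat \<Rightarrow> real" where
  "hps_seq X n = ln (real (num_blocks X n)) / (\<Sum>k\<le>n. (2::real) ^ k)"

end

theory Submission
  imports Defs "HOL-Real_Asymp.Real_Asymp"
begin

(* A block of height n+1 with root s is a pair of blocks of height n whose roots may follow s
   under P and under Q respectively.  For P = A and Q = E or G, let c be the symbol whose
   Q-successor is forced to be c (c = 0 for E, c = 1 for G), and let x(n), y(n) count the blocks
   rooted at c and at the other symbol.  Then x(n+1) = p(n) x(n) and y(n+1) = p(n)^2, whence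
   p(n) = (n+2) x(n) and x(n+1) = (n+2) x(n)^2.  So ln x(n) / 2^(n+1) is the n-th partial sum of
   the series sum_k ln(k+2) / 2^(k+2), and ln p(n) = ln(n+2) + ln x(n) divided by
   1 + 2 + ... + 2^n = 2^(n+1) - 1 tends to its sum.  Every block extends to a tree by labelling
   all deeper nodes with c, so p(n) is indeed the number of blocks. *)

lemma mem_Delta [simp]: "x \<in> Delta n \<longleftrightarrow> length x \<le> n"
  by (simp add: Delta_def)

lemma finite_Delta: "finite (Delta n)"
  using finite_lists_length_le[of "UNIV :: bool set" n] by (simp add: Delta_def)

(* Blocks are extensional on Delta n, so that they are exactly the restrictions of trees. *)
definition blocks :: "mat01 \<Rightarrow> mat01 \<Rightarrow> nat \<Rightarrow> tree set" where
  "blocks P Q n = {u \<in> Delta n \<rightarrow>\<^sub>E {0,1}. \<forall>x. length x < n \<longrightarrow>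
      P (u x) (u (x @ [False])) = 1 \<and> Q (u x) (u (x @ [True])) = 1}"

definition rooted_blocks :: "mat01 \<Rightarrow> mat01 \<Rightarrow> nat \<Rightarrow> nat \<Rightarrow> tree set" where
  "rooted_blocks P Q n s = {u \<in> blocks P Q n. u [] = s}"

lemma finite_blocks: "finite (blocks P Q n)"
  by (rule finite_subset[of _ "Delta n \<rightarrow>\<^sub>E {0,1}"])
    (auto simp: blocks_def intro!: finite_PiE finite_Delta)

lemma root_in_blocks: "u \<in> blocks P Q n \<Longrightarrow> u [] \<in> {0,1}"
  by (auto simp: blocks_def)

lemma restrict_tree_shift_eq_blocks:
  assumes d: "d \<in> {0,1}" and PQ_d: "\<And>i. i \<in> {0,1} \<Longrightarrow> P i d = 1 \<and> Q i d = 1"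
  shows "(\<lambda>t. restrict t (Delta n)) ` tree_shift P Q = blocks P Q n"
proof
  show "(\<lambda>t. restrict t (Delta n)) ` tree_shift P Q \<subseteq> blocks P Q n"
    by (fastforce simp: tree_shift_def blocks_def)
next
  show "blocks P Q n \<subseteq> (\<lambda>t. restrict t (Delta n)) ` tree_shift P Q"
  proof
    fix u assume u: "u \<in> blocks P Q n"
    define t where "t x = (if length x \<le> n then u x else d)" for x
    have u01: "length x \<le> n \<Longrightarrow> u x \<in> {0,1}" for x
      using u by (auto simp: blocks_def)
    have "t \<in> tree_shift P Q"
      unfolding tree_shift_def
    proof (intro CollectI conjI allI)
      fix x
      show "t x \<in> {0,1}"
        using u01 d by (auto simp: t_def)
      show "P (t x) (t (x @ [False])) = 1" "Q (t x) (t (x @ [True])) = 1"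
        using u u01[of x] PQ_d[of d] PQ_d[of "u x"] d
        by (cases "length x < n"; auto simp: t_def blocks_def)+
    qed
    moreover have "restrict t (Delta n) = u"
      using u by (auto simp: t_def blocks_def PiE_def extensional_def)
    ultimately show "u \<in> (\<lambda>t. restrict t (Delta n)) ` tree_shift P Q"
      by force
  qed
qed

lemma card_blocks:
  "card (blocks P Q n) = card (rooted_blocks P Q n 0) + card (rooted_blocks P Q n 1)"
proof -
  have "blocks P Q n = rooted_blocks P Q n 0 \<union> rooted_blocks P Q n 1"
    using root_in_blocks by (auto simp: rooted_blocks_def)
  moreover have "finite (rooted_blocks P Q n s)" for s
    using finite_blocks by (simp add: rooted_blocks_def)
  moreover have "rooted_blocks P Q n 0 \<inter> rooted_blocks P Q n 1 = {}"
    by (auto simp: rooted_blocks_def)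
  ultimately show ?thesis
    by (simp add: card_Un_disjoint)
qed

lemma card_rooted_blocks_0: "s \<in> {0,1} \<Longrightarrow> card (rooted_blocks P Q 0 s) = 1"
proof -
  assume "s \<in> {0,1}"
  then have "rooted_blocks P Q 0 s = {\<lambda>x. if x = [] then s else undefined}"
    by (auto simp: rooted_blocks_def blocks_def PiE_def extensional_def)
  then show ?thesis
    by simp
qed

definition subblock :: "nat \<Rightarrow> bool \<Rightarrow> tree \<Rightarrow> tree" where
  "subblock n b u = restrict (\<lambda>y. u (b # y)) (Delta n)"

definition graft :: "nat \<Rightarrow> nat \<Rightarrow> tree \<Rightarrow> tree \<Rightarrow> tree" where
  "graft n s L R =
    restrict (\<lambda>x. case x of [] \<Rightarrow> s | b # y \<Rightarrow> if b then R y else L y) (Delta (Suc n))"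

lemma subblock_graft:
  assumes "L \<in> extensional (Delta n)" "R \<in> extensional (Delta n)"
  shows "subblock n False (graft n s L R) = L" "subblock n True (graft n s L R) = R"
  using assms by (auto simp: subblock_def graft_def extensional_def)

lemma graft_subblocks:
  assumes "u \<in> extensional (Delta (Suc n))"
  shows "graft n (u []) (subblock n False u) (subblock n True u) = u"
proof
  fix x show "graft n (u []) (subblock n False u) (subblock n True u) x = u x"
    using assms by (cases x) (auto simp: subblock_def graft_def extensional_def)
qed

lemma subblock_in_blocks:
  assumes "u \<in> blocks P Q (Suc n)"
  shows "subblock n b u \<in> blocks P Q n"
proof -
  have "P (u (b # x)) (u (b # x @ [False])) = 1 \<and> Q (u (b # x)) (u (b # x @ [True])) = 1"
    if "length x < n" for x
    using assms that unfolding blocks_def by (auto dest!: spec[of _ "b # x"])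
  with assms show ?thesis
    by (auto simp: blocks_def subblock_def PiE_iff)
qed

lemma graft_in_rooted_blocks:
  assumes L: "L \<in> blocks P Q n" and R: "R \<in> blocks P Q n" and s: "s \<in> {0,1}"
    and root: "P s (L []) = 1" "Q s (R []) = 1"
  shows "graft n s L R \<in> rooted_blocks P Q (Suc n) s"
proof -
  have "graft n s L R \<in> Delta (Suc n) \<rightarrow>\<^sub>E {0,1}"
    using L R s by (auto simp: graft_def blocks_def PiE_iff split: list.split)
  moreover have "P (graft n s L R x) (graft n s L R (x @ [False])) = 1 \<and>
      Q (graft n s L R x) (graft n s L R (x @ [True])) = 1" if "length x < Suc n" for x
    using that L R root by (cases x) (auto simp: graft_def blocks_def)
  ultimately show ?thesis
    by (simp add: rooted_blocks_def blocks_def graft_def)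
qed

lemma card_rooted_blocks_Suc:
  assumes s: "s \<in> {0,1}"
  shows "card (rooted_blocks P Q (Suc n) s)
    = card {u \<in> blocks P Q n. P s (u []) = 1} * card {u \<in> blocks P Q n. Q s (u []) = 1}"
proof -
  have "bij_betw (\<lambda>u. (subblock n False u, subblock n True u)) (rooted_blocks P Q (Suc n) s)
      ({u \<in> blocks P Q n. P s (u []) = 1} \<times> {u \<in> blocks P Q n. Q s (u []) = 1})"
  proof (rule bij_betw_byWitness[where f' = "\<lambda>(L, R). graft n s L R"])
    show "\<forall>u \<in> rooted_blocks P Q (Suc n) s.
        (\<lambda>(L, R). graft n s L R) (subblock n False u, subblock n True u) = u"
      using graft_subblocks by (auto simp: rooted_blocks_def blocks_def PiE_def)
    show "\<forall>LR \<in> {u \<in> blocks P Q n. P s (u []) = 1} \<times> {u \<in> blocks P Q n. Q s (u []) = 1}.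
        (\<lambda>u. (subblock n False u, subblock n True u)) ((\<lambda>(L, R). graft n s L R) LR) = LR"
      using subblock_graft by (auto simp: blocks_def PiE_def)
    show "(\<lambda>u. (subblock n False u, subblock n True u)) ` rooted_blocks P Q (Suc n) s
        \<subseteq> {u \<in> blocks P Q n. P s (u []) = 1} \<times> {u \<in> blocks P Q n. Q s (u []) = 1}"
      by (auto simp: rooted_blocks_def subblock_in_blocks)
        (auto simp: blocks_def subblock_def dest!: spec[of _ "[]"])
    show "(\<lambda>(L, R). graft n s L R) `
        ({u \<in> blocks P Q n. P s (u []) = 1} \<times> {u \<in> blocks P Q n. Q s (u []) = 1})
        \<subseteq> rooted_blocks P Q (Suc n) s"
      using graft_in_rooted_blocks[OF _ _ s] by auto
  qed
  then show ?thesis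
    by (simp add: bij_betw_same_card card_cartesian_product)
qed

lemma card_rooted_blocks_matA_Suc:
  assumes c: "c \<in> {0,1}" and Q_c: "\<And>s. s \<in> {0,1} \<Longrightarrow> Q c s = 1 \<longleftrightarrow> s = c"
    and Q_other: "\<And>s. s \<in> {0,1} \<Longrightarrow> Q (1 - c) s = 1"
  shows "card (rooted_blocks matA Q (Suc n) c)
      = card (blocks matA Q n) * card (rooted_blocks matA Q n c)"
    and "card (rooted_blocks matA Q (Suc n) (1 - c)) = card (blocks matA Q n) ^ 2"
proof -
  have "{u \<in> blocks matA Q n. matA s (u []) = 1} = blocks matA Q n" for s
    by (simp add: matA_def)
  moreover have "{u \<in> blocks matA Q n. Q c (u []) = 1} = rooted_blocks matA Q n c"
    using Q_c root_in_blocks by (auto simp: rooted_blocks_def)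
  moreover have "{u \<in> blocks matA Q n. Q (1 - c) (u []) = 1} = blocks matA Q n"
    using Q_other root_in_blocks by auto
  moreover have "1 - c \<in> {0,1}"
    using c by auto
  ultimately show "card (rooted_blocks matA Q (Suc n) c)
      = card (blocks matA Q n) * card (rooted_blocks matA Q n c)"
    and "card (rooted_blocks matA Q (Suc n) (1 - c)) = card (blocks matA Q n) ^ 2"
    using card_rooted_blocks_Suc[OF c] card_rooted_blocks_Suc[of "1 - c"]
    by (simp_all add: power2_eq_square)
qed

lemma sum_of_pair_recurrence:
  fixes x y :: "nat \<Rightarrow> nat"
  assumes "x 0 = 1" "y 0 = 1"
    and "\<And>n. x (Suc n) = (x n + y n) * x n" "\<And>n. y (Suc n) = (x n + y n) ^ 2"
  shows "x n + y n = (n + 2) * x n"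
  by (induction n) (simp_all add: assms power2_eq_square algebra_simps)

lemma summable_ln_over_pow2: "summable (\<lambda>n. ln (real n + 2) / 2 ^ (n + 2))"
proof (rule summable_comparison_test_bigo)
  show "summable (\<lambda>n. norm (1 / (3/2::real) ^ n))"
    using summable_geometric[of "2/3::real"] by (simp add: power_divide)
  show "(\<lambda>n. ln (real n + 2) / 2 ^ (n + 2)) \<in> O(\<lambda>n. 1 / (3/2::real) ^ n)"
    by real_asymp
qed

lemma ln_over_pow2_eq_partial_sum:
  fixes x :: "nat \<Rightarrow> real"
  assumes x0: "x 0 = 1" and xSuc: "\<And>n. x (Suc n) = (real n + 2) * x n ^ 2"
  shows "x n > 0" and "ln (x n) / 2 ^ Suc n = (\<Sum>k<n. ln (real k + 2) / 2 ^ (k + 2))"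
proof -
  show pos: "x n > 0" for n
    by (induction n) (simp_all add: x0 xSuc)
  show "ln (x n) / 2 ^ Suc n = (\<Sum>k<n. ln (real k + 2) / 2 ^ (k + 2))"
  proof (induction n)
    case (Suc n)
    have "ln (x (Suc n)) = ln (real n + 2) + 2 * ln (x n)"
      using pos[of n] by (simp add: xSuc ln_mult ln_realpow)
    with Suc.IH show ?case
      by (simp add: field_simps)
  qed (simp add: x0)
qed

lemma tendsto_ln_over_geometric_sum:
  fixes x :: "nat \<Rightarrow> real"
  assumes x0: "x 0 = 1" and xSuc: "\<And>n. x (Suc n) = (real n + 2) * x n ^ 2"
  shows "(\<lambda>n. ln ((real n + 2) * x n) / (\<Sum>k\<le>n. 2 ^ k))
    \<longlonglongrightarrow> (\<Sum>n. ln (real n + 2) / 2 ^ (n + 2))"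
proof -
  let ?S = "\<lambda>n. \<Sum>k<n. ln (real k + 2) / 2 ^ (k + 2)"
  have "ln ((real n + 2) * x n) / (\<Sum>k\<le>n. 2 ^ k)
      = ln (real n + 2) / (2 ^ Suc n - 1) + 2 ^ Suc n / (2 ^ Suc n - 1) * ?S n" for n
  proof -
    have "(\<Sum>k\<le>n. (2::real) ^ k) = 2 ^ Suc n - 1"
      using sum_gp_basic[of "2::real" n] by (simp add: atLeast0AtMost)
    moreover have "ln (x n) = 2 ^ Suc n * ?S n"
      using ln_over_pow2_eq_partial_sum(2)[OF x0 xSuc, of n] by (simp add: divide_eq_eq)
    then have "ln ((real n + 2) * x n) = ln (real n + 2) + 2 ^ Suc n * ?S n"
      using ln_over_pow2_eq_partial_sum(1)[OF x0 xSuc, of n] by (simp add: ln_mult)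
    ultimately show ?thesis
      by (simp add: add_divide_distrib)
  qed
  moreover have "(\<lambda>n. ln (real n + 2) / (2 ^ Suc n - 1) + 2 ^ Suc n / (2 ^ Suc n - 1) * ?S n)
      \<longlonglongrightarrow> 0 + 1 * (\<Sum>n. ln (real n + 2) / 2 ^ (n + 2))"
  proof (intro tendsto_add tendsto_mult)
    show "(\<lambda>n. ln (real n + 2) / (2 ^ Suc n - 1 :: real)) \<longlonglongrightarrow> 0"
      by real_asymp
    show "(\<lambda>n. 2 ^ Suc n / (2 ^ Suc n - 1 :: real)) \<longlonglongrightarrow> 1"
      by real_asymp
    show "?S \<longlonglongrightarrow> (\<Sum>n. ln (real n + 2) / 2 ^ (n + 2))"
      using summable_LIMSEQ[OF summable_ln_over_pow2] .
  qed
  ultimately show ?thesis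
    by simp
qed

lemma hps_seq_tree_shift_matA_tendsto:
  assumes c: "c \<in> {0,1}" and Q_c: "\<And>s. s \<in> {0,1} \<Longrightarrow> Q c s = 1 \<longleftrightarrow> s = c"
    and Q_other: "\<And>s. s \<in> {0,1} \<Longrightarrow> Q (1 - c) s = 1"
  shows "hps_seq (tree_shift matA Q) \<longlonglongrightarrow> (\<Sum>n. ln (real n + 2) / 2 ^ (n + 2))"
proof -
  define x where "x n = card (rooted_blocks matA Q n c)" for n
  define y where "y n = card (rooted_blocks matA Q n (1 - c))" for n
  have x0: "x 0 = 1" and y0: "y 0 = 1"
    using c by (auto simp: x_def y_def card_rooted_blocks_0)
  have blocks_xy: "card (blocks matA Q n) = x n + y n" for n
    using c card_blocks[of matA Q n] by (auto simp: x_def y_def)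
  have xSuc_xy: "x (Suc n) = (x n + y n) * x n" and ySuc_xy: "y (Suc n) = (x n + y n) ^ 2" for n
    using card_rooted_blocks_matA_Suc[OF c Q_c Q_other]
    by (simp_all add: x_def y_def blocks_xy)
  have xy: "x n + y n = (n + 2) * x n" for n
    using x0 y0 xSuc_xy ySuc_xy by (rule sum_of_pair_recurrence)
  have into_c: "matA i c = 1 \<and> Q i c = 1" if "i \<in> {0,1}" for i
  proof -
    have "Q c c = 1" "Q (1 - c) c = 1"
      using Q_c Q_other c by blast+
    moreover have "i = c \<or> i = 1 - c"
      using that c by auto
    ultimately show ?thesis
      by (auto simp: matA_def)
  qed
  have "(\<lambda>t. restrict t (Delta n)) ` tree_shift matA Q = blocks matA Q n" for n
    using c into_c by (rule restrict_tree_shift_eq_blocks)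
  then have "real (num_blocks (tree_shift matA Q) n) = (real n + 2) * real (x n)" for n
    by (simp add: num_blocks_def blocks_xy xy algebra_simps)
  then have "hps_seq (tree_shift matA Q) = (\<lambda>n. ln ((real n + 2) * real (x n)) / (\<Sum>k\<le>n. 2 ^ k))"
    unfolding hps_seq_def by (simp only:)
  also have "\<dots> \<longlonglongrightarrow> (\<Sum>n. ln (real n + 2) / 2 ^ (n + 2))"
  proof (rule tendsto_ln_over_geometric_sum)
    have "x (Suc n) = (n + 2) * x n ^ 2" for n
      by (simp add: xSuc_xy xy power2_eq_square algebra_simps)
    then show "real (x (Suc n)) = (real n + 2) * real (x n) ^ 2" for n
      by (simp add: algebra_simps)
  qed (simp add: x0)
  finally show ?thesis .
qed

theorem mainTheorem14:
  shows "\<exists>S. (\<lambda>n. ln (real n + 2) / 2 ^ (n + 2)) sums S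
           \<and> hps_seq (tree_shift matA matE) \<longlonglongrightarrow> S
           \<and> hps_seq (tree_shift matA matG) \<longlonglongrightarrow> S"
proof (intro exI conjI)
  show "(\<lambda>n. ln (real n + 2) / 2 ^ (n + 2)) sums (\<Sum>n. ln (real n + 2) / 2 ^ (n + 2))"
    using summable_ln_over_pow2 by (rule summable_sums)
  show "hps_seq (tree_shift matA matE) \<longlonglongrightarrow> (\<Sum>n. ln (real n + 2) / 2 ^ (n + 2))"
    by (rule hps_seq_tree_shift_matA_tendsto[where c = 0]) (auto simp: matE_def)
  show "hps_seq (tree_shift matA matG) \<longlonglongrightarrow> (\<Sum>n. ln (real n + 2) / 2 ^ (n + 2))"
    by (rule hps_seq_tree_shift_matA_tendsto[where c = 1]) (auto simp: matG_def)
qed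

end
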